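(* Suppose the chain is recurrent and there exist a finite set $A\subset\mathbb X$ and a constant $C>0$ such that $\mathbb E_x\tau_A\le C$ for all $x\in\mathbb X$. Then the chain implodes towards every state $z\in\mathbb X$, i.e.\ for every $z\in\mathbb X$ there is $K_z<\infty$ with $\mathbb E_x\tau_{\{z\}}\le K_z$ for all $x\neq z$.
   Context: Let $\mathbb X$ be a countably infinite set and $\Gamma=(\Gamma_{xy})_{x,y\in\mathbb X}$ a matrix with $\Gamma_{xy}\ge0$ for $y\ne x$, $\gamma_x:=\sum_{y\ne x}\Gamma_{xy}$, $\Gamma_{xx}=-\gamma_x$, and $0<\gamma_x<\infty$ for all $x$. Let $P_{xy}=\Gamma_{xy}/\gamma_x$ for $y\neq x$ and $P_{xx}=0$; the discrete-time chain $(\tilde\xi_n)$ with transition matrix $P$ (embedded jump chain) is assumed irreducible. The continuous-time Markov chain $(\xi_t)_{t\ge0}$ with generator $\Gamma$: conditionally on $\tilde\xi$, holding times $\sigma_n$ ($n\ge1$) are independent exponential with parameter $\gamma_{\tilde\xi_{n-1}}$; $J_0=0$, $J_n=\sigma_1+\dots+\sigma_n$, $\zeta=\lim_nJ_n$; $\xi_t=\tilde\xi_n$ on $[J_n,J_{n+1})$, $\xi_t=\partial$ for $t\ge\zeta$. $\mathbb E_x$ refers to $\xi_0=x$; $\tau_A=\inf\{t\ge0:\xi_t\in A\}$. The chain implodes towards a proper subset $B$ if there is $K>0$ with $\mathbb E_x\tau_B\le K$ for all $x\in B^c$. *)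

theory Defs
  imports "HOL-Probability.Probability"
begin

definition rate :: "('a \<Rightarrow> 'a \<Rightarrow> real) \<Rightarrow> 'a \<Rightarrow> real" where
  "rate \<Gamma> x = - \<Gamma> x x"

definition jump_matrix :: "('a \<Rightarrow> 'a \<Rightarrow> real) \<Rightarrow> 'a \<Rightarrow> 'a \<Rightarrow> real" where
  "jump_matrix \<Gamma> x y = (if y = x then 0 else \<Gamma> x y / rate \<Gamma> x)"

definition generator :: "('a \<Rightarrow> 'a \<Rightarrow> real) \<Rightarrow> bool" where
  "generator \<Gamma> \<longleftrightarrow>
     (\<forall>x y. y \<noteq> x \<longrightarrow> \<Gamma> x y \<ge> 0) \<and>
     (\<forall>x. ((\<lambda>y. \<Gamma> x y) has_sum rate \<Gamma> x) (UNIV - {x})) \<and>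
     (\<forall>x. rate \<Gamma> x > 0)"

definition jump_irreducible :: "('a \<Rightarrow> 'a \<Rightarrow> real) \<Rightarrow> bool" where
  "jump_irreducible \<Gamma> \<longleftrightarrow>
     (\<forall>x y. (x, y) \<in> {(u, v). jump_matrix \<Gamma> u v > 0}\<^sup>*)"

text \<open>A realization of the chain: for every initial state x a probability space M x
  carrying the jump chain xi~_n (n \<ge> 0) and holding times sigma_n (n \<ge> 1) with the
  prescribed joint law: xi~ is a Markov chain with transition matrix P started at x and,
  conditionally on xi~, the sigma_n are independent Exp(gamma_{xi~_{n-1}}).
  The finite-dimensional distributions below determine this joint law.\<close>
definition ctmc_realization ::
  "('a \<Rightarrow> 'a \<Rightarrow> real) \<Rightarrow> ('a \<Rightarrow> 'w measure) \<Rightarrow> (nat \<Rightarrow> 'w \<Rightarrow> 'a) \<Rightarrow> (nat \<Rightarrow> 'w \<Rightarrow> real) \<Rightarrow> bool"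
where
  "ctmc_realization \<Gamma> M jc \<sigma> \<longleftrightarrow>
     (\<forall>x. prob_space (M x) \<and>
        (\<forall>n. jc n \<in> measurable (M x) (count_space UNIV)) \<and>
        (\<forall>n. \<sigma> n \<in> borel_measurable (M x)) \<and>
        (\<forall>n (ys :: nat \<Rightarrow> 'a) (ts :: nat \<Rightarrow> real). (\<forall>k\<in>{1..n}. ts k \<ge> 0) \<longrightarrow>
           measure (M x) {\<omega> \<in> space (M x). (\<forall>k\<le>n. jc k \<omega> = ys k) \<and> (\<forall>k\<in>{1..n}. \<sigma> k \<omega> > ts k)}
           = (if ys 0 = x then 1 else 0) *
             (\<Prod>k<n. jump_matrix \<Gamma> (ys k) (ys (Suc k)) * exp (- rate \<Gamma> (ys k) * ts (Suc k)))))"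

definition jump_time :: "(nat \<Rightarrow> 'w \<Rightarrow> real) \<Rightarrow> nat \<Rightarrow> 'w \<Rightarrow> real" where
  "jump_time \<sigma> n \<omega> = (\<Sum>k\<in>{1..n}. \<sigma> k \<omega>)"

text \<open>The continuous-time process: xi_t = xi~_n on [J_n, J_{n+1}), and the cemetery
  state (None) for t \<ge> zeta = lim J_n.\<close>
definition ctmc_state :: "(nat \<Rightarrow> 'w \<Rightarrow> 'a) \<Rightarrow> (nat \<Rightarrow> 'w \<Rightarrow> real) \<Rightarrow> real \<Rightarrow> 'w \<Rightarrow> 'a option" where
  "ctmc_state jc \<sigma> t \<omega> =
     (if \<exists>n. jump_time \<sigma> n \<omega> \<le> t \<and> t < jump_time \<sigma> (Suc n) \<omega>
      then Some (jc (LEAST n. jump_time \<sigma> n \<omega> \<le> t \<and> t < jump_time \<sigma> (Suc n) \<omega>) \<omega>)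
      else None)"

definition hitting_time :: "(nat \<Rightarrow> 'w \<Rightarrow> 'a) \<Rightarrow> (nat \<Rightarrow> 'w \<Rightarrow> real) \<Rightarrow> 'a set \<Rightarrow> 'w \<Rightarrow> ennreal" where
  "hitting_time jc \<sigma> B \<omega> = Inf {ennreal t | t. t \<ge> 0 \<and> ctmc_state jc \<sigma> t \<omega> \<in> Some ` B}"

definition expected_hitting_time ::
  "('a \<Rightarrow> 'w measure) \<Rightarrow> (nat \<Rightarrow> 'w \<Rightarrow> 'a) \<Rightarrow> (nat \<Rightarrow> 'w \<Rightarrow> real) \<Rightarrow> 'a \<Rightarrow> 'a set \<Rightarrow> ennreal" where
  "expected_hitting_time M jc \<sigma> x B = (\<integral>\<^sup>+ \<omega>. hitting_time jc \<sigma> B \<omega> \<partial>M x)"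

definition recurrent_chain ::
  "('a \<Rightarrow> 'w measure) \<Rightarrow> (nat \<Rightarrow> 'w \<Rightarrow> 'a) \<Rightarrow> bool" where
  "recurrent_chain M jc \<longleftrightarrow>
     (\<forall>x. measure (M x) {\<omega> \<in> space (M x). \<exists>n\<ge>1. jc n \<omega> = x} = 1)"

definition implodes_towards ::
  "('a \<Rightarrow> 'w measure) \<Rightarrow> (nat \<Rightarrow> 'w \<Rightarrow> 'a) \<Rightarrow> (nat \<Rightarrow> 'w \<Rightarrow> real) \<Rightarrow> 'a set \<Rightarrow> bool" where
  "implodes_towards M jc \<sigma> B \<longleftrightarrow>
     (\<exists>K::real. K > 0 \<and> (\<forall>x. x \<notin> B \<longrightarrow> expected_hitting_time M jc \<sigma> x B \<le> ennreal K))"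

end

theory Submission
  imports Defs
begin

text \<open>Let P be the jump matrix and g = 1/gamma the mean holding times. Then E_x tau_B is the
  increasing limit of the expected g-costs collected by the jump chain before it enters B, and
  the probability of never entering B is the decreasing limit of the probabilities of avoiding
  B for n steps. Bounded mean hitting times of A make the chain enter A almost surely and give a
  bounded supersolution h of u = g + P u off A. Two maximum principles pass from A to a single
  state z. First, the probability of never reaching z is subharmonic off z and hence bounded by
  its maximum over the finite set A; irreducibility propagates this maximum along a path of
  positive transitions to z, where the probability vanishes. Second, after enlarging A to a
  finite set inside which every state leads to z, adding to h the weights D q^(L + 1 - rank)
  on A, with q = 2/p for the least positive transition probability p inside A and the rank the
  distance to z, yields a bounded supersolution off z, and it dominates E_x tau_z.\<close>

lemma nn_integral_count_space_point:
  "(\<integral>\<^sup>+y. (if y = a then f y else 0) \<partial>count_space UNIV) = (f a :: ennreal)"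
proof -
  have "(\<integral>\<^sup>+y. (if y = a then f y else 0) \<partial>count_space UNIV)
      = (\<integral>\<^sup>+y. f a * indicator {a} y \<partial>count_space UNIV)"
    by (intro nn_integral_cong) (auto split: split_indicator)
  then show ?thesis by (simp add: nn_integral_cmult_indicator)
qed

lemma nn_integral_count_space_split_point:
  "(\<integral>\<^sup>+y. f y \<partial>count_space UNIV)
     = f b + (\<integral>\<^sup>+y. (if y = b then 0 else f y) \<partial>count_space UNIV)"
proof -
  have "(\<integral>\<^sup>+y. f y \<partial>count_space UNIV)
      = (\<integral>\<^sup>+y. (if y = b then f y else 0) + (if y = b then 0 else f y) \<partial>count_space UNIV)"
    by (rule nn_integral_cong) simp
  also have "\<dots> = f b + (\<integral>\<^sup>+y. (if y = b then 0 else f y) \<partial>count_space UNIV)"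
    by (subst nn_integral_add) (auto simp: nn_integral_count_space_point)
  finally show ?thesis .
qed

lemma nn_integral_count_space_swap:
  fixes f :: "'a::countable \<Rightarrow> 'b::countable \<Rightarrow> ennreal"
  shows "(\<integral>\<^sup>+x. \<integral>\<^sup>+y. f x y \<partial>count_space UNIV \<partial>count_space UNIV)
       = (\<integral>\<^sup>+y. \<integral>\<^sup>+x. f x y \<partial>count_space UNIV \<partial>count_space UNIV)"
  by (rule nn_integral_count_space_nn_integral) auto

lemma nn_integral_count_space_has_sum:
  fixes f :: "'a \<Rightarrow> real"
  assumes "(f has_sum S) A" and "\<And>x. 0 \<le> f x"
  shows "(\<integral>\<^sup>+x. ennreal (f x) \<partial>count_space A) = ennreal S"
proof -
  have "Infinite_Set_Sum.abs_summable_on f A"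
    using assms abs_summable_equivalent summable_on_def summable_on_iff_abs_summable_on_real by blast
  then have "(\<integral>\<^sup>+x. ennreal (f x) \<partial>count_space A) = ennreal (infsum f A)"
    using assms(2) by (simp add: nn_integral_conv_infsetsum infsetsum_infsum)
  then show ?thesis using assms(1) by (simp add: infsumI)
qed

lemma INF_mult_left_le_ennreal:
  fixes c :: ennreal and f :: "nat \<Rightarrow> ennreal"
  assumes "c < top"
  shows "(INF i. c * f i) \<le> c * (INF i. f i)"
proof (cases "c = 0")
  case False
  let ?I = "INF i. c * f i"
  have "?I / c \<le> f i" for i
  proof -
    have "?I \<le> c * f i" by (rule INF_lower) simp
    then have "?I / c \<le> (f i * c) / c" by (simp add: divide_right_mono_ennreal mult.commute)
    also have "\<dots> = f i" using False assms by (simp add: mult_divide_eq_ennreal)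
    finally show ?thesis .
  qed
  then have "(?I / c) * c \<le> (INF i. f i) * c" by (intro mult_right_mono INF_greatest) simp_all
  moreover have "(?I / c) * c = ?I" using False assms by (simp add: ennreal_divide_times)
  ultimately show ?thesis by (simp add: mult.commute)
qed simp

lemma nn_integral_exp_neg:
  fixes r :: real
  assumes "0 < r"
  shows "(\<integral>\<^sup>+t. indicator {0..} t * ennreal (exp (- r * t)) \<partial>lborel) = ennreal (1 / r)"
proof -
  interpret prob_space "density lborel (exponential_density r)"
    by (rule prob_space_exponential_density[OF assms])
  define X where "X = (\<integral>\<^sup>+t. indicator {0..} t * ennreal (exp (- r * t)) \<partial>lborel)"
  have "1 = (\<integral>\<^sup>+t. ennreal (exponential_density r t) \<partial>lborel)"
    using emeasure_space_1 by (simp add: emeasure_density)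
  also have "\<dots> = (\<integral>\<^sup>+t. ennreal r * (indicator {0..} t * ennreal (exp (- r * t))) \<partial>lborel)"
    using assms by (intro nn_integral_cong)
      (auto simp: exponential_density_def ennreal_mult mult.commute split: split_indicator)
  also have "\<dots> = ennreal r * X" by (simp add: X_def nn_integral_cmult)
  finally have "X * ennreal r = 1" by (simp add: mult.commute)
  then have "X = 1 / ennreal r"
    using assms by (metis ennreal_eq_0_iff ennreal_neq_top mult_divide_eq_ennreal not_less order_refl)
  also have "\<dots> = ennreal (1 / r)"
    using divide_ennreal[of 1 r] assms by simp
  finally show ?thesis by (simp add: X_def)
qed

lemma rtrancl_descending_rank:
  assumes "\<And>a. a \<in> A \<Longrightarrow> (a, z) \<in> R\<^sup>*"
  obtains rk :: "'a \<Rightarrow> nat" where "\<And>a. a \<in> A \<Longrightarrow> a \<noteq> z \<Longrightarrow> \<exists>b. (a, b) \<in> R \<and> rk b < rk a"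
proof -
  define rk where "rk a = (LEAST k. (a, z) \<in> R ^^ k)" for a
  have "\<exists>b. (a, b) \<in> R \<and> rk b < rk a" if a: "a \<in> A" "a \<noteq> z" for a
  proof -
    obtain k where "(a, z) \<in> R ^^ k" using assms[OF a(1)] rtrancl_power by blast
    then have path: "(a, z) \<in> R ^^ rk a" unfolding rk_def by (rule LeastI)
    with \<open>a \<noteq> z\<close> obtain k where k: "rk a = Suc k" by (cases "rk a") auto
    with path obtain b where "(a, b) \<in> R" "(b, z) \<in> R ^^ k" by (metis relpow_Suc_D2)
    moreover have "rk b \<le> k" unfolding rk_def using \<open>(b, z) \<in> R ^^ k\<close> by (rule Least_le)
    ultimately show ?thesis using k by auto
  qed
  then show thesis using that by blast
qed

lemma finite_superset_rtrancl_connected: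
  assumes reach: "\<And>x. (x, z) \<in> R\<^sup>*" and "finite A"
  obtains A' where "finite A'" "A \<subseteq> A'" "z \<in> A'" "\<And>a. a \<in> A' \<Longrightarrow> (a, z) \<in> (R \<inter> A' \<times> A')\<^sup>*"
proof -
  have mono: "S \<subseteq> S' \<Longrightarrow> (R \<inter> S \<times> S)\<^sup>* \<subseteq> (R \<inter> S' \<times> S')\<^sup>*" for S S'
    by (intro rtrancl_mono) auto
  have path: "\<exists>S. finite S \<and> a \<in> S \<and> z \<in> S \<and> (\<forall>b\<in>S. (b, z) \<in> (R \<inter> S \<times> S)\<^sup>*)" for a
    using reach[of a]
  proof (induction rule: converse_rtrancl_induct)
    case base
    show ?case by (intro exI[of _ "{z}"]) auto
  next
    case (step a b)
    then obtain S where S: "finite S" "b \<in> S" "z \<in> S" "\<forall>c\<in>S. (c, z) \<in> (R \<inter> S \<times> S)\<^sup>*" by blast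
    have sub: "(R \<inter> S \<times> S)\<^sup>* \<subseteq> (R \<inter> insert a S \<times> insert a S)\<^sup>*" by (rule mono) auto
    have "(a, b) \<in> R \<inter> insert a S \<times> insert a S" using step(1) S(2) by auto
    then have "(a, z) \<in> (R \<inter> insert a S \<times> insert a S)\<^sup>*"
      using S(2,4) sub by (meson converse_rtrancl_into_rtrancl subsetD)
    then show ?case using S sub by (intro exI[of _ "insert a S"]) auto
  qed
  obtain S where S: "\<And>a. finite (S a) \<and> a \<in> S a \<and> z \<in> S a \<and> (\<forall>b\<in>S a. (b, z) \<in> (R \<inter> S a \<times> S a)\<^sup>*)"
    using path by metis
  define A' where "A' = insert z (\<Union>a\<in>A. S a)"
  show thesis
  proof (rule that[of A'])
    show "finite A'" "A \<subseteq> A'" "z \<in> A'" using \<open>finite A\<close> S by (auto simp: A'_def)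
    fix b assume "b \<in> A'"
    then consider "b = z" | a where "a \<in> A" "b \<in> S a" by (auto simp: A'_def)
    then show "(b, z) \<in> (R \<inter> A' \<times> A')\<^sup>*"
    proof cases
      case 2
      then have "S a \<subseteq> A'" by (auto simp: A'_def)
      then show ?thesis using S[of a] 2 mono by blast
    qed simp
  qed
qed

section \<open>Taboo probabilities\<close>

text \<open>For the chain with transition matrix P started at x: taboo_prob P B n x y is the probability
  of being at y at step n without having visited B at steps 0, ..., n - 1, avoid_prob P B n x
  the probability of avoiding B at those steps, and truncated_cost P g B n x the expected cost
  g collected at the steps k < n preceding the first visit to B.\<close>

fun taboo_prob :: "('a \<Rightarrow> 'a \<Rightarrow> real) \<Rightarrow> 'a set \<Rightarrow> nat \<Rightarrow> 'a \<Rightarrow> 'a \<Rightarrow> ennreal" where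
  "taboo_prob P B 0 x y = (if x = y then 1 else 0)"
| "taboo_prob P B (Suc n) x y =
     (if x \<in> B then 0 else \<integral>\<^sup>+z. ennreal (P x z) * taboo_prob P B n z y \<partial>count_space UNIV)"

fun avoid_prob :: "('a \<Rightarrow> 'a \<Rightarrow> real) \<Rightarrow> 'a set \<Rightarrow> nat \<Rightarrow> 'a \<Rightarrow> ennreal" where
  "avoid_prob P B 0 x = 1"
| "avoid_prob P B (Suc n) x =
     (if x \<in> B then 0 else \<integral>\<^sup>+z. ennreal (P x z) * avoid_prob P B n z \<partial>count_space UNIV)"

fun truncated_cost :: "('a \<Rightarrow> 'a \<Rightarrow> real) \<Rightarrow> ('a \<Rightarrow> real) \<Rightarrow> 'a set \<Rightarrow> nat \<Rightarrow> 'a \<Rightarrow> ennreal" where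
  "truncated_cost P g B 0 x = 0"
| "truncated_cost P g B (Suc n) x =
     (if x \<in> B then 0
      else ennreal (g x) + (\<integral>\<^sup>+z. ennreal (P x z) * truncated_cost P g B n z \<partial>count_space UNIV))"

lemma taboo_prob_from_taboo: "x \<in> B \<Longrightarrow> y \<notin> B \<Longrightarrow> taboo_prob P B n x y = 0"
  by (cases n) auto

lemma taboo_prob_Suc_last:
  fixes P :: "'a::countable \<Rightarrow> 'a \<Rightarrow> real"
  shows "taboo_prob P B (Suc n) x y' =
    (\<integral>\<^sup>+y. (if y \<in> B then 0 else taboo_prob P B n x y * ennreal (P y y')) \<partial>count_space UNIV)"
proof (induction n arbitrary: x)
  case 0
  have "(\<integral>\<^sup>+z. ennreal (P x z) * taboo_prob P B 0 z y' \<partial>count_space UNIV)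
      = (\<integral>\<^sup>+z. (if z = y' then ennreal (P x z) else 0) \<partial>count_space UNIV)"
    by (intro nn_integral_cong) auto
  moreover have "(\<integral>\<^sup>+y. (if y \<in> B then 0 else taboo_prob P B 0 x y * ennreal (P y y')) \<partial>count_space UNIV)
      = (\<integral>\<^sup>+y. (if y = x then (if y \<in> B then 0 else ennreal (P y y')) else 0) \<partial>count_space UNIV)"
    by (intro nn_integral_cong) auto
  ultimately show ?case by (simp add: nn_integral_count_space_point)
next
  case (Suc n)
  show ?case
  proof (cases "x \<in> B")
    case False
    have "taboo_prob P B (Suc (Suc n)) x y'
        = (\<integral>\<^sup>+z. \<integral>\<^sup>+y. ennreal (P x z) * (if y \<in> B then 0 else taboo_prob P B n z y * ennreal (P y y'))
             \<partial>count_space UNIV \<partial>count_space UNIV)"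
      using False by (subst taboo_prob.simps, subst Suc.IH) (simp add: nn_integral_cmult)
    also have "\<dots> = (\<integral>\<^sup>+y. \<integral>\<^sup>+z.
             ennreal (P x z) * (if y \<in> B then 0 else taboo_prob P B n z y * ennreal (P y y'))
             \<partial>count_space UNIV \<partial>count_space UNIV)"
      by (rule nn_integral_count_space_swap)
    also have "\<dots> = (\<integral>\<^sup>+y. (if y \<in> B then 0 else taboo_prob P B (Suc n) x y * ennreal (P y y'))
        \<partial>count_space UNIV)"
      using False
      by (intro nn_integral_cong) (simp add: nn_integral_multc mult.assoc[symmetric])
    finally show ?thesis .
  next
    case True
    then have "(\<lambda>y. if y \<in> B then 0 else taboo_prob P B (Suc n) x y * ennreal (P y y')) = (\<lambda>_. 0)"
      by auto
    then show ?thesis using True by simp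
  qed
qed

lemma avoid_prob_eq_nn_integral_taboo_prob:
  fixes P :: "'a::countable \<Rightarrow> 'a \<Rightarrow> real"
  shows "avoid_prob P B n x = (\<integral>\<^sup>+y. taboo_prob P B n x y \<partial>count_space UNIV)"
proof (induction n arbitrary: x)
  case 0
  have "(\<integral>\<^sup>+y. taboo_prob P B 0 x y \<partial>count_space UNIV)
      = (\<integral>\<^sup>+y. (if y = x then 1 else 0) \<partial>count_space UNIV)"
    by (intro nn_integral_cong) auto
  then show ?case by (simp add: nn_integral_count_space_point)
next
  case (Suc n)
  show ?case
  proof (cases "x \<in> B")
    case False
    have "(\<integral>\<^sup>+y. taboo_prob P B (Suc n) x y \<partial>count_space UNIV)
        = (\<integral>\<^sup>+z. \<integral>\<^sup>+y. ennreal (P x z) * taboo_prob P B n z y \<partial>count_space UNIV \<partial>count_space UNIV)"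
      using False
      by (simp add: nn_integral_count_space_swap[of "\<lambda>y z. ennreal (P x z) * taboo_prob P B n z y"])
    then show ?thesis using False by (simp add: nn_integral_cmult Suc.IH)
  qed simp
qed

lemma truncated_cost_eq_sum_taboo_prob:
  fixes P :: "'a::countable \<Rightarrow> 'a \<Rightarrow> real"
  shows "truncated_cost P g B n x =
    (\<Sum>k<n. \<integral>\<^sup>+y. (if y \<in> B then 0 else ennreal (g y) * taboo_prob P B k x y) \<partial>count_space UNIV)"
proof (induction n arbitrary: x)
  case (Suc n)
  let ?F = "\<lambda>k x y. if y \<in> B then 0 else ennreal (g y) * taboo_prob P B k x y"
  show ?case
  proof (cases "x \<in> B")
    case True
    then have "?F k x = (\<lambda>_. 0)" for k by (auto simp: taboo_prob_from_taboo)
    then show ?thesis using True by simp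
  next
    case False
    have first: "(\<integral>\<^sup>+y. ?F 0 x y \<partial>count_space UNIV) = ennreal (g x)"
    proof -
      have "(\<integral>\<^sup>+y. ?F 0 x y \<partial>count_space UNIV)
          = (\<integral>\<^sup>+y. (if y = x then ennreal (g y) else 0) \<partial>count_space UNIV)"
        using False by (intro nn_integral_cong) auto
      then show ?thesis by (simp add: nn_integral_count_space_point)
    qed
    have step: "(\<integral>\<^sup>+z. ennreal (P x z) * (\<integral>\<^sup>+y. ?F k z y \<partial>count_space UNIV) \<partial>count_space UNIV)
        = (\<integral>\<^sup>+y. ?F (Suc k) x y \<partial>count_space UNIV)" for k
    proof -
      have "(\<integral>\<^sup>+z. ennreal (P x z) * (\<integral>\<^sup>+y. ?F k z y \<partial>count_space UNIV) \<partial>count_space UNIV)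
          = (\<integral>\<^sup>+y. \<integral>\<^sup>+z. ennreal (P x z) * ?F k z y \<partial>count_space UNIV \<partial>count_space UNIV)"
        by (simp add: nn_integral_cmult flip: nn_integral_count_space_swap)
      also have "\<dots> = (\<integral>\<^sup>+y. ?F (Suc k) x y \<partial>count_space UNIV)"
      proof (intro nn_integral_cong)
        fix y
        have "(\<integral>\<^sup>+z. ennreal (P x z) * (ennreal (g y) * taboo_prob P B k z y) \<partial>count_space UNIV)
            = ennreal (g y) * (\<integral>\<^sup>+z. ennreal (P x z) * taboo_prob P B k z y \<partial>count_space UNIV)"
          by (subst nn_integral_cmult[symmetric]) (simp_all add: mult.left_commute)
        then show "(\<integral>\<^sup>+z. ennreal (P x z) * ?F k z y \<partial>count_space UNIV) = ?F (Suc k) x y"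
          using False by simp
      qed
      finally show ?thesis .
    qed
    have "truncated_cost P g B (Suc n) x
        = ennreal (g x) +
          (\<Sum>k<n. \<integral>\<^sup>+z. ennreal (P x z) * (\<integral>\<^sup>+y. ?F k z y \<partial>count_space UNIV) \<partial>count_space UNIV)"
      using False by (simp add: Suc.IH sum_distrib_left nn_integral_sum)
    also have "\<dots> = (\<Sum>k<Suc n. \<integral>\<^sup>+y. ?F k x y \<partial>count_space UNIV)"
      by (simp only: step first sum.lessThan_Suc_shift)
    finally show ?thesis .
  qed
qed simp

lemma truncated_cost_le_supersolution:
  assumes "\<And>x. x \<notin> B \<Longrightarrow> ennreal (g x) + (\<integral>\<^sup>+y. ennreal (P x y) * f y \<partial>count_space UNIV) \<le> f x"
  shows "truncated_cost P g B n x \<le> f x"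
proof (induction n arbitrary: x)
  case (Suc n)
  show ?case
  proof (cases "x \<in> B")
    case False
    have "(\<integral>\<^sup>+y. ennreal (P x y) * truncated_cost P g B n y \<partial>count_space UNIV)
        \<le> (\<integral>\<^sup>+y. ennreal (P x y) * f y \<partial>count_space UNIV)"
      by (intro nn_integral_mono mult_left_mono Suc.IH) simp
    then have "truncated_cost P g B (Suc n) x
        \<le> ennreal (g x) + (\<integral>\<^sup>+y. ennreal (P x y) * f y \<partial>count_space UNIV)"
      using False by (simp add: add_left_mono)
    also have "\<dots> \<le> f x" by (rule assms[OF False])
    finally show ?thesis .
  qed simp
qed simp

section \<open>Maximum principles for a stochastic matrix\<close>

lemma geometric_weight_step:
  fixes p q t C D e :: real
  assumes "0 < p" "p \<le> t" "p * q = 2" "1 \<le> q" "m < n"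
    and "0 \<le> e" "0 \<le> C" "e + C + 1 \<le> D"
  shows "e + C + D * q ^ m \<le> t * (C + D * q ^ n)"
proof -
  have "e + C + D * q ^ m \<le> D * q ^ m + D * q ^ m"
    using assms one_le_power[of q m] by (smt (verit) mult_left_mono mult_cancel_left1)
  also have "\<dots> = p * (D * q ^ Suc m)" using assms(3) by (simp add: algebra_simps)
  also have "\<dots> \<le> p * (D * q ^ n)"
    using assms by (intro mult_left_mono power_increasing) auto
  also have "\<dots> \<le> t * (C + D * q ^ n)"
    using assms by (intro mult_mono) auto
  finally show ?thesis .
qed

locale stochastic_matrix =
  fixes P :: "'a::countable \<Rightarrow> 'a \<Rightarrow> real"
  assumes nonneg: "0 \<le> P x y"
    and row_sum: "(\<integral>\<^sup>+y. ennreal (P x y) \<partial>count_space UNIV) = 1"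
begin

lemma entry_le_1: "P x y \<le> 1"
proof -
  have "ennreal (P x y) \<le> (\<integral>\<^sup>+y. ennreal (P x y) \<partial>count_space UNIV)"
    by (subst nn_integral_count_space_split_point[where b = y]) simp
  then show ?thesis by (simp add: row_sum ennreal_le_1)
qed

lemma nn_integral_row_cmult: "(\<integral>\<^sup>+y. ennreal (P x y) * c \<partial>count_space UNIV) = c"
  by (simp add: nn_integral_multc row_sum)

lemma nn_integral_row_except:
  "(\<integral>\<^sup>+y. (if y = b then 0 else ennreal (P x y)) \<partial>count_space UNIV) = ennreal (1 - P x b)"
proof -
  have "ennreal (P x b) + (\<integral>\<^sup>+y. (if y = b then 0 else ennreal (P x y)) \<partial>count_space UNIV) = 1"
    using nn_integral_count_space_split_point[of "\<lambda>y. ennreal (P x y)" b] by (simp add: row_sum)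
  then have "(\<integral>\<^sup>+y. (if y = b then 0 else ennreal (P x y)) \<partial>count_space UNIV) = 1 - ennreal (P x b)"
    by (metis ennreal_add_diff_cancel_left ennreal_neq_top)
  then show ?thesis using nonneg[of x b] by (simp add: ennreal_minus[symmetric])
qed

lemma avoid_prob_le_1: "avoid_prob P B n x \<le> 1"
proof (induction n arbitrary: x)
  case (Suc n)
  have "(\<integral>\<^sup>+z. ennreal (P x z) * avoid_prob P B n z \<partial>count_space UNIV)
      \<le> (\<integral>\<^sup>+z. ennreal (P x z) * 1 \<partial>count_space UNIV)"
    by (intro nn_integral_mono mult_left_mono Suc.IH) simp
  then show ?case by (simp add: row_sum)
qed simp

lemma avoid_prob_Suc_le: "avoid_prob P B (Suc n) x \<le> avoid_prob P B n x"
proof (induction n arbitrary: x)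
  case 0
  show ?case using avoid_prob_le_1[of B "Suc 0" x] by simp
next
  case (Suc n)
  have "(\<integral>\<^sup>+z. ennreal (P x z) * avoid_prob P B (Suc n) z \<partial>count_space UNIV)
      \<le> (\<integral>\<^sup>+z. ennreal (P x z) * avoid_prob P B n z \<partial>count_space UNIV)"
    by (intro nn_integral_mono mult_left_mono Suc.IH) simp
  then show ?case by simp
qed

lemma avoid_prob_antimono: "B \<subseteq> B' \<Longrightarrow> avoid_prob P B' n x \<le> avoid_prob P B n x"
proof (induction n arbitrary: x)
  case (Suc n)
  have "(\<integral>\<^sup>+z. ennreal (P x z) * avoid_prob P B' n z \<partial>count_space UNIV)
      \<le> (\<integral>\<^sup>+z. ennreal (P x z) * avoid_prob P B n z \<partial>count_space UNIV)"
    by (intro nn_integral_mono mult_left_mono Suc.IH Suc.prems) simp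
  then show ?case using Suc.prems by auto
qed simp

lemma truncated_cost_Suc_ge: "truncated_cost P g B n x \<le> truncated_cost P g B (Suc n) x"
proof (induction n arbitrary: x)
  case (Suc n)
  have "(\<integral>\<^sup>+z. ennreal (P x z) * truncated_cost P g B n z \<partial>count_space UNIV)
      \<le> (\<integral>\<^sup>+z. ennreal (P x z) * truncated_cost P g B (Suc n) z \<partial>count_space UNIV)"
    by (intro nn_integral_mono mult_left_mono Suc.IH) simp
  then show ?case by (simp add: add_left_mono)
qed simp

lemma truncated_cost_antimono: "B \<subseteq> B' \<Longrightarrow> truncated_cost P g B' n x \<le> truncated_cost P g B n x"
proof (induction n arbitrary: x)
  case (Suc n)
  have "(\<integral>\<^sup>+z. ennreal (P x z) * truncated_cost P g B' n z \<partial>count_space UNIV)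
      \<le> (\<integral>\<^sup>+z. ennreal (P x z) * truncated_cost P g B n z \<partial>count_space UNIV)"
    by (intro nn_integral_mono mult_left_mono Suc.IH Suc.prems) simp
  then show ?case using Suc.prems by (auto simp: add_left_mono)
qed simp

lemma SUP_truncated_cost_supersolution:
  assumes "x \<notin> B"
  shows "ennreal (g x) + (\<integral>\<^sup>+y. ennreal (P x y) * (SUP n. truncated_cost P g B n y) \<partial>count_space UNIV)
    \<le> (SUP n. truncated_cost P g B n x)"
proof -
  have "(\<integral>\<^sup>+y. ennreal (P x y) * (SUP n. truncated_cost P g B n y) \<partial>count_space UNIV)
      = (SUP n. \<integral>\<^sup>+y. ennreal (P x y) * truncated_cost P g B n y \<partial>count_space UNIV)"
    unfolding SUP_mult_left_ennreal
    by (rule nn_integral_monotone_convergence_SUP)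
      (auto intro!: incseq_SucI le_funI mult_left_mono truncated_cost_Suc_ge)
  then have "ennreal (g x) + (\<integral>\<^sup>+y. ennreal (P x y) * (SUP n. truncated_cost P g B n y) \<partial>count_space UNIV)
      = (SUP n. truncated_cost P g B (Suc n) x)"
    using assms by (simp add: ennreal_SUP_add_right)
  also have "\<dots> \<le> (SUP n. truncated_cost P g B n x)"
    by (intro SUP_least SUP_upper) simp
  finally show ?thesis .
qed

lemma INF_avoid_prob_subharmonic:
  assumes "x \<notin> B"
  shows "(INF n. avoid_prob P B n x)
    \<le> (\<integral>\<^sup>+y. ennreal (P x y) * (INF n. avoid_prob P B n y) \<partial>count_space UNIV)"
proof -
  have "(INF n. avoid_prob P B n x) \<le> (INF n. avoid_prob P B (Suc n) x)"
    by (intro INF_greatest INF_lower) simp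
  also have "\<dots> = (INF n. \<integral>\<^sup>+y. ennreal (P x y) * avoid_prob P B n y \<partial>count_space UNIV)"
    using assms by simp
  also have "\<dots> = (\<integral>\<^sup>+y. (INF n. ennreal (P x y) * avoid_prob P B n y) \<partial>count_space UNIV)"
  proof (rule nn_integral_monotone_convergence_INF_decseq[symmetric])
    show "decseq (\<lambda>n y. ennreal (P x y) * avoid_prob P B n y)"
      by (intro decseq_SucI le_funI mult_left_mono avoid_prob_Suc_le) simp
    have "(\<integral>\<^sup>+y. ennreal (P x y) * avoid_prob P B n y \<partial>count_space UNIV)
        \<le> (\<integral>\<^sup>+y. ennreal (P x y) * 1 \<partial>count_space UNIV)" for n
      by (intro nn_integral_mono mult_left_mono avoid_prob_le_1) simp
    then show "(\<integral>\<^sup>+y. ennreal (P x y) * avoid_prob P B n y \<partial>count_space UNIV) < \<infinity>" for n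
      by (simp add: row_sum) (meson ennreal_one_less_top le_less_trans)
  qed simp
  also have "\<dots> \<le> (\<integral>\<^sup>+y. ennreal (P x y) * (INF n. avoid_prob P B n y) \<partial>count_space UNIV)"
    by (intro nn_integral_mono INF_mult_left_le_ennreal) simp
  finally show ?thesis .
qed

lemma subharmonic_bounded_by_hit_set:
  fixes h :: "'a \<Rightarrow> ennreal"
  assumes sub: "\<And>x. x \<notin> A \<Longrightarrow> h x \<le> (\<integral>\<^sup>+y. ennreal (P x y) * h y \<partial>count_space UNIV)"
    and le_1: "\<And>x. h x \<le> 1" and bound: "\<And>a. a \<in> A \<Longrightarrow> h a \<le> s"
    and hit: "(INF n. avoid_prob P A n x) = 0"
  shows "h x \<le> s"
proof -
  have "h x \<le> s + avoid_prob P A n x" for n x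
  proof (induction n arbitrary: x)
    case 0
    show ?case using le_1[of x] by (simp add: add_increasing)
  next
    case (Suc n)
    show ?case
    proof (cases "x \<in> A")
      case False
      have "h x \<le> (\<integral>\<^sup>+y. ennreal (P x y) * s + ennreal (P x y) * avoid_prob P A n y \<partial>count_space UNIV)"
        using sub[OF False] by (rule order_trans)
          (intro nn_integral_mono, simp add: distrib_left[symmetric] mult_left_mono Suc.IH)
      also have "\<dots> = s + avoid_prob P A (Suc n) x"
        using False by (simp add: nn_integral_add nn_integral_row_cmult)
      finally show ?thesis .
    qed (simp add: bound)
  qed
  then have "h x \<le> (INF n. s + avoid_prob P A n x)" by (intro INF_greatest)
  also have "\<dots> = s" by (simp add: INF_ennreal_const_add hit)
  finally show ?thesis .
qed

lemma subharmonic_max_at_successor: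
  fixes h :: "'a \<Rightarrow> ennreal"
  assumes sub: "h a \<le> (\<integral>\<^sup>+y. ennreal (P a y) * h y \<partial>count_space UNIV)"
    and max: "\<And>y. h y \<le> h a" and finite: "h a < top" and edge: "0 < P a b"
  shows "h b = h a"
proof -
  define r where "r y = enn2real (h y)" for y
  have h_r: "h y = ennreal (r y)" for y
    unfolding r_def using max[of y] finite by (simp add: ennreal_enn2real le_less_trans)
  have r_nonneg: "0 \<le> r y" for y by (simp add: r_def)
  have "(\<integral>\<^sup>+y. ennreal (P a y) * h y \<partial>count_space UNIV)
      = ennreal (P a b) * h b + (\<integral>\<^sup>+y. (if y = b then 0 else ennreal (P a y) * h y) \<partial>count_space UNIV)"
    by (rule nn_integral_count_space_split_point)
  also have "\<dots> \<le> ennreal (P a b) * h b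
      + (\<integral>\<^sup>+y. (if y = b then 0 else ennreal (P a y)) * h a \<partial>count_space UNIV)"
    by (intro add_left_mono nn_integral_mono) (auto intro: mult_left_mono max)
  also have "\<dots> = ennreal (P a b * r b + (1 - P a b) * r a)"
    using nonneg[of a b] entry_le_1[of a b] r_nonneg
    by (simp add: nn_integral_multc nn_integral_row_except h_r ennreal_mult' ennreal_plus)
  finally have "ennreal (r a) \<le> ennreal (P a b * r b + (1 - P a b) * r a)"
    using sub by (simp add: h_r)
  then have "r a \<le> P a b * r b + (1 - P a b) * r a"
    using nonneg[of a b] entry_le_1[of a b] r_nonneg
    by (subst (asm) ennreal_le_iff) (auto intro!: add_nonneg_nonneg mult_nonneg_nonneg)
  then have "P a b * r a \<le> P a b * r b" by (simp add: algebra_simps)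
  then have "r a \<le> r b" using edge by simp
  moreover have "r b \<le> r a" using max[of b] r_nonneg by (simp add: h_r ennreal_le_iff)
  ultimately show ?thesis by (simp add: h_r)
qed

lemma INF_avoid_prob_singleton_eq_0:
  assumes irreducible: "\<And>x y. (x, y) \<in> {(u, v). 0 < P u v}\<^sup>*"
    and "finite A" "z \<in> A" and hit: "\<And>x. (INF n. avoid_prob P A n x) = 0"
  shows "(INF n. avoid_prob P {z} n x) = 0"
proof -
  define e where "e x = (INF n. avoid_prob P {z} n x)" for x
  have e_le_1: "e x \<le> 1" for x unfolding e_def by (rule INF_lower2[of 0]) simp_all
  have e_z: "e z = 0" unfolding e_def by (rule antisym, rule INF_lower2[of 1]) simp_all
  have sub: "x \<noteq> z \<Longrightarrow> e x \<le> (\<integral>\<^sup>+y. ennreal (P x y) * e y \<partial>count_space UNIV)" for x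
    unfolding e_def by (rule INF_avoid_prob_subharmonic) simp
  define s where "s = Max (e ` A)"
  have e_le_s: "e x \<le> s" for x
  proof (rule subharmonic_bounded_by_hit_set[where A = A])
    show "y \<notin> A \<Longrightarrow> e y \<le> (\<integral>\<^sup>+u. ennreal (P y u) * e u \<partial>count_space UNIV)" for y
      using \<open>z \<in> A\<close> by (intro sub) auto
    show "a \<in> A \<Longrightarrow> e a \<le> s" for a using \<open>finite A\<close> by (simp add: s_def)
  qed (simp_all add: e_le_1 hit)
  have "s \<in> e ` A" unfolding s_def using assms by (intro Max_in) auto
  then obtain a where "e a = s" by blast
  have "e y = s \<Longrightarrow> e z = s" if "(y, z) \<in> {(u, v). 0 < P u v}\<^sup>*" for y
    using that
  proof (induction rule: converse_rtrancl_induct)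
    case (step y b)
    show ?case
    proof (cases "y = z")
      case False
      have "e b = e y"
        using step(1) e_le_1[of y] step(4) e_le_s
        by (intro subharmonic_max_at_successor sub[OF False]) (auto simp: top_unique order_le_less_trans)
      then show ?thesis using step by simp
    qed (use step in simp)
  qed
  then have "s = 0" using irreducible \<open>e a = s\<close> e_z by metis
  then show ?thesis using e_le_s[of x] by (simp add: e_def)
qed

lemma supersolution_add_const:
  assumes super: "ennreal (g x) + (\<integral>\<^sup>+y. ennreal (P x y) * h y \<partial>count_space UNIV) \<le> h x"
    and f_le: "\<And>y. f y \<le> h y + ennreal c"
  shows "ennreal (g x) + (\<integral>\<^sup>+y. ennreal (P x y) * f y \<partial>count_space UNIV) \<le> h x + ennreal c"
proof -
  have "(\<integral>\<^sup>+y. ennreal (P x y) * f y \<partial>count_space UNIV)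
      \<le> (\<integral>\<^sup>+y. ennreal (P x y) * h y + ennreal (P x y) * ennreal c \<partial>count_space UNIV)"
    by (intro nn_integral_mono) (simp add: distrib_left[symmetric] mult_left_mono f_le)
  also have "\<dots> = (\<integral>\<^sup>+y. ennreal (P x y) * h y \<partial>count_space UNIV) + ennreal c"
    by (simp add: nn_integral_add nn_integral_row_cmult)
  finally have "ennreal (g x) + (\<integral>\<^sup>+y. ennreal (P x y) * f y \<partial>count_space UNIV)
      \<le> (ennreal (g x) + (\<integral>\<^sup>+y. ennreal (P x y) * h y \<partial>count_space UNIV)) + ennreal c"
    by (simp add: add_left_mono add.assoc)
  also have "\<dots> \<le> h x + ennreal c" using super by (rule add_right_mono)
  finally show ?thesis .
qed

lemma supersolution_by_successor:
  fixes f :: "'a \<Rightarrow> ennreal" and u :: "'a \<Rightarrow> real"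
  assumes f_le: "\<And>y. f y \<le> ennreal (c - u y)" and u_nonneg: "\<And>y. 0 \<le> u y" and u_le: "\<And>y. u y \<le> c"
    and "0 \<le> e" and gap: "e + c \<le> w + P x b * u b"
  shows "ennreal e + (\<integral>\<^sup>+y. ennreal (P x y) * f y \<partial>count_space UNIV) \<le> ennreal w"
proof -
  define I where "I = (\<integral>\<^sup>+y. ennreal (P x y) * ennreal (c - u y) \<partial>count_space UNIV)"
  define J where "J = (\<integral>\<^sup>+y. ennreal (P x y) * ennreal (u y) \<partial>count_space UNIV)"
  have "I + J = (\<integral>\<^sup>+y. ennreal (P x y) * ennreal c \<partial>count_space UNIV)"
    unfolding I_def J_def using u_nonneg u_le
    by (subst nn_integral_add[symmetric])
      (auto intro!: nn_integral_cong simp: distrib_left[symmetric] ennreal_plus[symmetric])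
  also have "\<dots> = ennreal c" by (rule nn_integral_row_cmult)
  finally have IJ: "I + J = ennreal c" .
  have "ennreal (P x b * u b) \<le> J"
    unfolding J_def using nonneg[of x b] u_nonneg[of b]
    by (subst nn_integral_count_space_split_point[of _ b]) (simp add: ennreal_mult)
  then have "I + ennreal (P x b * u b) \<le> ennreal c"
    unfolding IJ[symmetric] by (rule add_left_mono)
  then have "I \<le> ennreal (c - P x b * u b)"
    using nonneg[of x b] u_nonneg[of b] by (simp add: ennreal_le_minus_iff ennreal_minus[symmetric])
  moreover have "(\<integral>\<^sup>+y. ennreal (P x y) * f y \<partial>count_space UNIV) \<le> I"
    unfolding I_def by (intro nn_integral_mono mult_left_mono f_le) simp
  moreover have "P x b * u b \<le> c"
    using entry_le_1[of x b] nonneg[of x b] u_nonneg[of b] u_le[of b]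
    by (metis mult_left_le_one_le order_trans)
  ultimately have "ennreal e + (\<integral>\<^sup>+y. ennreal (P x y) * f y \<partial>count_space UNIV)
      \<le> ennreal (e + (c - P x b * u b))"
    using \<open>0 \<le> e\<close> by (simp add: ennreal_plus add_left_mono)
  also have "\<dots> \<le> ennreal w" using gap by (intro ennreal_leI) simp
  finally show ?thesis .
qed

lemma geometric_weights_towards:
  fixes g :: "'a \<Rightarrow> real"
  assumes "finite A" "z \<in> A"
    and conn: "\<And>a. a \<in> A \<Longrightarrow> (a, z) \<in> ({(u, v). 0 < P u v} \<inter> A \<times> A)\<^sup>*"
    and g_nonneg: "\<And>x. 0 \<le> g x" and "0 \<le> C"
  obtains d :: "'a \<Rightarrow> real" and M where "\<And>a. 0 \<le> d a" "\<And>a. d a \<le> M"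
    and "\<And>x. x \<in> A \<Longrightarrow> x \<noteq> z \<Longrightarrow> \<exists>b\<in>A. g x + C + d x \<le> P x b * (C + d b)"
proof -
  define R where "R = {(u, v). 0 < P u v} \<inter> A \<times> A"
  obtain rk :: "'a \<Rightarrow> nat"
    where descent: "\<And>a. a \<in> A \<Longrightarrow> a \<noteq> z \<Longrightarrow> \<exists>b. (a, b) \<in> R \<and> rk b < rk a"
    using rtrancl_descending_rank[of A z R] conn unfolding R_def by blast
  have "finite R" using finite_subset[of R "A \<times> A"] \<open>finite A\<close> by (auto simp: R_def)
  define p where "p = Min (insert 1 ((\<lambda>(u, v). P u v) ` R))"
  have p_pos: "0 < p" unfolding p_def using \<open>finite R\<close> by (subst Min_gr_iff) (auto simp: R_def)
  have p_le: "p \<le> 1" "(u, v) \<in> R \<Longrightarrow> p \<le> P u v" for u v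
    unfolding p_def using \<open>finite R\<close> by (auto intro!: Min_le)
  define q where "q = 2 / p"
  have q: "p * q = 2" "1 \<le> q" using p_pos p_le by (simp_all add: q_def field_simps)
  define L where "L = Max (rk ` A)"
  define D where "D = 1 + C + Max (g ` A)"
  have D: "a \<in> A \<Longrightarrow> g a + C + 1 \<le> D" for a using \<open>finite A\<close> by (simp add: D_def)
  have "0 \<le> D" using D[OF \<open>z \<in> A\<close>] g_nonneg[of z] \<open>0 \<le> C\<close> by linarith
  define d where "d a = D * q ^ (L + 1 - rk a)" for a
  show thesis
  proof (rule that)
    show "0 \<le> d a" "d a \<le> D * q ^ (L + 1)" for a
      unfolding d_def using \<open>0 \<le> D\<close> q by (auto simp del: power_Suc intro!: mult_left_mono power_increasing)
    fix x assume "x \<in> A" "x \<noteq> z"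
    with descent obtain b where "(x, b) \<in> R" "rk b < rk x" by blast
    then have "b \<in> A" "p \<le> P x b" by (auto simp: R_def p_le)
    have "rk x \<le> L" using \<open>x \<in> A\<close> \<open>finite A\<close> by (simp add: L_def)
    then have "g x + C + d x \<le> P x b * (C + d b)"
      unfolding d_def using \<open>rk b < rk x\<close> \<open>p \<le> P x b\<close> p_pos q g_nonneg \<open>0 \<le> C\<close> D[OF \<open>x \<in> A\<close>]
      by (intro geometric_weight_step) auto
    with \<open>b \<in> A\<close> show "\<exists>b\<in>A. g x + C + d x \<le> P x b * (C + d b)" by blast
  qed
qed

lemma bounded_supersolution_off_singleton:
  fixes g :: "'a \<Rightarrow> real" and h :: "'a \<Rightarrow> ennreal"
  assumes "finite A" "z \<in> A"
    and conn: "\<And>a. a \<in> A \<Longrightarrow> (a, z) \<in> ({(u, v). 0 < P u v} \<inter> A \<times> A)\<^sup>*"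
    and g_nonneg: "\<And>x. 0 \<le> g x" and "0 \<le> C" and h_le: "\<And>x. h x \<le> ennreal C"
    and h_super: "\<And>x. x \<notin> A \<Longrightarrow>
      ennreal (g x) + (\<integral>\<^sup>+y. ennreal (P x y) * h y \<partial>count_space UNIV) \<le> h x"
  obtains f K where "\<And>x. f x \<le> ennreal K"
    and "\<And>x. x \<noteq> z \<Longrightarrow> ennreal (g x) + (\<integral>\<^sup>+y. ennreal (P x y) * f y \<partial>count_space UNIV) \<le> f x"
proof -
  obtain d :: "'a \<Rightarrow> real" and M where d: "\<And>a. 0 \<le> d a" "\<And>a. d a \<le> M"
    and gap: "\<And>x. x \<in> A \<Longrightarrow> x \<noteq> z \<Longrightarrow> \<exists>b\<in>A. g x + C + d x \<le> P x b * (C + d b)"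
    using geometric_weights_towards[where g = g, OF assms(1-5)] by blast
  define u where "u y = (if y \<in> A then C + d y else 0)" for y
  define f where "f x = (if x \<in> A then ennreal (M - d x) else h x + ennreal M)" for x
  have "0 \<le> M" using d[of z] by linarith
  have u: "0 \<le> u y" "u y \<le> C + M" for y using d[of y] \<open>0 \<le> C\<close> by (auto simp: u_def)
  have f_le: "f y \<le> ennreal (C + M - u y)" for y
    using h_le[of y] \<open>0 \<le> C\<close> \<open>0 \<le> M\<close> by (auto simp: f_def u_def ennreal_plus add_right_mono)
  show thesis
  proof (rule that)
    show "f x \<le> ennreal (C + M)" for x using f_le[of x] u[of x] by (simp add: order_trans ennreal_leI)
    fix x assume "x \<noteq> z"
    show "ennreal (g x) + (\<integral>\<^sup>+y. ennreal (P x y) * f y \<partial>count_space UNIV) \<le> f x"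
    proof (cases "x \<in> A")
      case False
      have "f y \<le> h y + ennreal M" for y
        using d(1)[of y] by (auto simp: f_def intro!: add_increasing ennreal_leI)
      with h_super[OF False] show ?thesis
        using supersolution_add_const[where g = g and h = h and x = x and f = f] False by (simp add: f_def)
    next
      case True
      then obtain b where "b \<in> A" and "g x + C + d x \<le> P x b * (C + d b)"
        using gap \<open>x \<noteq> z\<close> by blast
      then have "g x + C + d x \<le> P x b * u b" by (simp add: u_def)
      then have "ennreal (g x) + (\<integral>\<^sup>+y. ennreal (P x y) * f y \<partial>count_space UNIV) \<le> ennreal (M - d x)"
        using f_le u g_nonneg[of x]
        by (intro supersolution_by_successor[where u = u and c = "C + M" and b = b]) simp_all
      then show ?thesis using True by (simp add: f_def)
    qed
  qed
qed

lemma truncated_cost_singleton_bounded: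
  assumes "finite A" "z \<in> A"
    and conn: "\<And>a. a \<in> A \<Longrightarrow> (a, z) \<in> ({(u, v). 0 < P u v} \<inter> A \<times> A)\<^sup>*"
    and g_nonneg: "\<And>x. 0 \<le> g x" and "0 \<le> C"
    and bounded: "\<And>n x. truncated_cost P g A n x \<le> ennreal C"
  obtains K where "\<And>n x. truncated_cost P g {z} n x \<le> ennreal K"
proof -
  have "(SUP n. truncated_cost P g A n x) \<le> ennreal C" for x by (intro SUP_least bounded)
  from bounded_supersolution_off_singleton[OF assms(1-5) this SUP_truncated_cost_supersolution]
  obtain f K where f_le: "\<And>x. f x \<le> ennreal K"
    and super: "\<And>x. x \<noteq> z \<Longrightarrow> ennreal (g x) + (\<integral>\<^sup>+y. ennreal (P x y) * f y \<partial>count_space UNIV) \<le> f x"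
    by blast
  have "truncated_cost P g {z} n x \<le> f x" for n x
    by (rule truncated_cost_le_supersolution) (simp add: super)
  then show thesis using f_le by (intro that) (rule order_trans)
qed

end

lemma jump_time_Suc: "jump_time \<sigma> (Suc n) \<omega> = jump_time \<sigma> n \<omega> + \<sigma> (Suc n) \<omega>"
  by (simp add: jump_time_def)

lemma jump_time_eq_sum: "jump_time \<sigma> n \<omega> = (\<Sum>k<n. \<sigma> (Suc k) \<omega>)"
  unfolding jump_time_def using sum_bounds_lt_plus1[of "\<lambda>k. \<sigma> k \<omega>" n] by simp

lemma jump_time_mono:
  assumes "\<And>k. 1 \<le> k \<Longrightarrow> 0 \<le> \<sigma> k \<omega>" and "m \<le> n"
  shows "jump_time \<sigma> m \<omega> \<le> jump_time \<sigma> n \<omega>"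
  using assms(2)
proof (induction n)
  case (Suc n)
  have "0 \<le> \<sigma> (Suc n) \<omega>" using assms(1) by simp
  with Suc show ?case by (cases "m = Suc n") (auto simp: jump_time_Suc le_Suc_eq)
qed simp

lemma ctmc_state_SomeD:
  assumes "ctmc_state jc \<sigma> t \<omega> = Some y"
  shows "\<exists>m. jump_time \<sigma> m \<omega> \<le> t \<and> jc m \<omega> = y"
proof -
  let ?Q = "\<lambda>n. jump_time \<sigma> n \<omega> \<le> t \<and> t < jump_time \<sigma> (Suc n) \<omega>"
  have ex: "\<exists>n. ?Q n" using assms by (auto simp: ctmc_state_def split: if_splits)
  then have "?Q (LEAST n. ?Q n)" by (rule LeastI_ex)
  moreover have "jc (LEAST n. ?Q n) \<omega> = y" using assms ex by (simp add: ctmc_state_def)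
  ultimately show ?thesis by blast
qed

lemma hitting_time_eq_top_if_never_visits:
  assumes "\<And>n. jc n \<omega> \<notin> B"
  shows "hitting_time jc \<sigma> B \<omega> = top"
proof -
  have "ctmc_state jc \<sigma> t \<omega> \<notin> Some ` B" for t
    using ctmc_state_SomeD[of jc \<sigma> t \<omega>] assms by blast
  then show ?thesis by (simp add: hitting_time_def)
qed

text \<open>With positive holding times this is min (J_n, tau_B).\<close>
definition truncated_hitting_time ::
  "(nat \<Rightarrow> 'w \<Rightarrow> 'a) \<Rightarrow> (nat \<Rightarrow> 'w \<Rightarrow> real) \<Rightarrow> 'a set \<Rightarrow> nat \<Rightarrow> 'w \<Rightarrow> ennreal" where
  "truncated_hitting_time jc \<sigma> B n \<omega> =
     (\<Sum>k<n. ennreal (\<sigma> (Suc k) \<omega>) * (if \<forall>j\<le>k. jc j \<omega> \<notin> B then 1 else 0))"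

lemma incseq_truncated_hitting_time: "incseq (\<lambda>n. truncated_hitting_time jc \<sigma> B n)"
  by (intro incseq_SucI le_funI) (simp add: truncated_hitting_time_def)

lemma truncated_hitting_time_le_hitting_time:
  assumes "\<And>k. 1 \<le> k \<Longrightarrow> 0 \<le> \<sigma> k \<omega>"
  shows "truncated_hitting_time jc \<sigma> B n \<omega> \<le> hitting_time jc \<sigma> B \<omega>"
  unfolding hitting_time_def
proof (rule Inf_greatest)
  fix u assume "u \<in> {ennreal t | t. 0 \<le> t \<and> ctmc_state jc \<sigma> t \<omega> \<in> Some ` B}"
  then obtain t where u: "u = ennreal t" and "ctmc_state jc \<sigma> t \<omega> \<in> Some ` B" by blast
  then obtain m where m: "jump_time \<sigma> m \<omega> \<le> t" "jc m \<omega> \<in> B"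
    using ctmc_state_SomeD by fastforce
  let ?f = "\<lambda>k. ennreal (\<sigma> (Suc k) \<omega>) * (if \<forall>j\<le>k. jc j \<omega> \<notin> B then 1 else 0)"
  have "truncated_hitting_time jc \<sigma> B n \<omega> = (\<Sum>k\<in>{..<n} \<inter> {..<m}. ?f k)"
    unfolding truncated_hitting_time_def using m(2)
    by (intro sum.mono_neutral_right) (auto, meson not_less)
  also have "\<dots> \<le> (\<Sum>k<m. ennreal (\<sigma> (Suc k) \<omega>))"
    by (intro order_trans[OF sum_mono2 sum_mono]) auto
  also have "\<dots> = ennreal (jump_time \<sigma> m \<omega>)"
    using assms by (simp add: jump_time_eq_sum sum_ennreal)
  also have "\<dots> \<le> ennreal t" using m(1) by (rule ennreal_leI)
  finally show "truncated_hitting_time jc \<sigma> B n \<omega> \<le> u" by (simp add: u)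
qed

lemma hitting_time_le_SUP_truncated_hitting_time:
  assumes pos: "\<And>k. 1 \<le> k \<Longrightarrow> 0 < \<sigma> k \<omega>" and visit: "jc N \<omega> \<in> B"
  shows "hitting_time jc \<sigma> B \<omega> \<le> (SUP n. truncated_hitting_time jc \<sigma> B n \<omega>)"
proof -
  define N0 where "N0 = (LEAST N. jc N \<omega> \<in> B)"
  have N0: "jc N0 \<omega> \<in> B" unfolding N0_def using visit by (rule LeastI)
  have before: "k < N0 \<Longrightarrow> jc k \<omega> \<notin> B" for k unfolding N0_def by (rule not_less_Least)
  have pos': "\<And>k. 1 \<le> k \<Longrightarrow> 0 \<le> \<sigma> k \<omega>" using pos less_imp_le by blast
  let ?t = "jump_time \<sigma> N0 \<omega>"
  let ?Q = "\<lambda>n. jump_time \<sigma> n \<omega> \<le> ?t \<and> ?t < jump_time \<sigma> (Suc n) \<omega>"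
  have "(LEAST n. ?Q n) = N0"
  proof (rule Least_equality)
    show "?Q N0" using pos[of "Suc N0"] by (simp add: jump_time_Suc)
    show "N0 \<le> n" if "?Q n" for n
      using that pos' jump_time_mono[where \<sigma> = \<sigma> and \<omega> = \<omega> and m = "Suc n" and n = N0]
      by (cases "Suc n \<le> N0") auto
  qed
  moreover have "?Q N0" using pos[of "Suc N0"] by (simp add: jump_time_Suc)
  ultimately have "ctmc_state jc \<sigma> ?t \<omega> = Some (jc N0 \<omega>)" by (auto simp: ctmc_state_def)
  moreover have "0 \<le> ?t"
    using pos' jump_time_mono[where \<sigma> = \<sigma> and \<omega> = \<omega> and m = 0 and n = N0]
    by (simp add: jump_time_def)
  ultimately have "hitting_time jc \<sigma> B \<omega> \<le> ennreal ?t"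
    unfolding hitting_time_def using N0 by (intro Inf_lower) auto
  also have "\<dots> = truncated_hitting_time jc \<sigma> B N0 \<omega>"
    using before pos' by (simp add: truncated_hitting_time_def jump_time_eq_sum sum_ennreal)
  also have "\<dots> \<le> (SUP n. truncated_hitting_time jc \<sigma> B n \<omega>)" by (rule SUP_upper) simp
  finally show ?thesis .
qed

section \<open>Law of a realization\<close>

definition path_prob :: "('a \<Rightarrow> 'a \<Rightarrow> real) \<Rightarrow> 'a \<Rightarrow> nat \<Rightarrow> (nat \<Rightarrow> 'a) \<Rightarrow> real" where
  "path_prob P x n ys = (if ys 0 = x then 1 else 0) * (\<Prod>k<n. P (ys k) (ys (Suc k)))"

lemma path_prob_Suc: "path_prob P x (Suc n) (ys(Suc n := y)) = path_prob P x n ys * P (ys n) y"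
proof -
  have "(\<Prod>k<n. P ((ys(Suc n := y)) k) ((ys(Suc n := y)) (Suc k))) = (\<Prod>k<n. P (ys k) (ys (Suc k)))"
    by (intro prod.cong) auto
  then show ?thesis by (simp add: path_prob_def)
qed

locale ctmc_model =
  fixes \<Gamma> :: "'a::countable \<Rightarrow> 'a \<Rightarrow> real" and M :: "'a \<Rightarrow> 'w measure"
    and jc :: "nat \<Rightarrow> 'w \<Rightarrow> 'a" and \<sigma> :: "nat \<Rightarrow> 'w \<Rightarrow> real"
  assumes generator: "generator \<Gamma>" and realization: "ctmc_realization \<Gamma> M jc \<sigma>"
begin

lemma rate_pos: "0 < rate \<Gamma> x"
  using generator by (simp add: generator_def)

lemma jump_matrix_nonneg: "0 \<le> jump_matrix \<Gamma> x y"
  using generator rate_pos[of x] by (auto simp: generator_def jump_matrix_def intro!: divide_nonneg_pos)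

lemma jump_matrix_row_sum: "(\<integral>\<^sup>+y. ennreal (jump_matrix \<Gamma> x y) \<partial>count_space UNIV) = 1"
proof -
  have "(\<Gamma> x has_sum rate \<Gamma> x) (UNIV - {x})" using generator by (simp add: generator_def)
  from has_sum_divide_const[OF this, of "rate \<Gamma> x"]
  have "((\<lambda>y. \<Gamma> x y / rate \<Gamma> x) has_sum 1) (UNIV - {x})"
    using rate_pos[of x] by simp
  then have "(jump_matrix \<Gamma> x has_sum 1) (UNIV - {x})"
    by (rule has_sum_cong[THEN iffD1, rotated]) (simp add: jump_matrix_def)
  then have "(jump_matrix \<Gamma> x has_sum 1) UNIV"
    using has_sum_insert[of x "UNIV - {x}" "jump_matrix \<Gamma> x" 1] by (simp add: jump_matrix_def insert_absorb)
  from nn_integral_count_space_has_sum[OF this jump_matrix_nonneg] show ?thesis by simp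
qed

sublocale stochastic_matrix "jump_matrix \<Gamma>"
  by unfold_locales (rule jump_matrix_nonneg, rule jump_matrix_row_sum)

lemma prob_space_M: "prob_space (M x)"
  using realization by (simp add: ctmc_realization_def)

lemma measurable_jc[measurable]: "jc n \<in> measurable (M x) (count_space UNIV)"
  using realization by (simp add: ctmc_realization_def)

lemma measurable_holding_time[measurable]: "\<sigma> n \<in> borel_measurable (M x)"
  using realization by (simp add: ctmc_realization_def)

lemma emeasure_path_holding_event:
  assumes "\<forall>k\<in>{1..n}. 0 \<le> ts k"
  shows "emeasure (M x) {\<omega> \<in> space (M x). (\<forall>k\<le>n. jc k \<omega> = ys k) \<and> (\<forall>k\<in>{1..n}. \<sigma> k \<omega> > ts k)}
    = ennreal ((if ys 0 = x then 1 else 0) *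
        (\<Prod>k<n. jump_matrix \<Gamma> (ys k) (ys (Suc k)) * exp (- rate \<Gamma> (ys k) * ts (Suc k))))"
proof -
  interpret prob_space "M x" by (rule prob_space_M)
  show ?thesis using realization assms by (simp add: ctmc_realization_def emeasure_eq_measure)
qed

lemma path_prob_jump_matrix_nonneg: "0 \<le> path_prob (jump_matrix \<Gamma>) x n ys"
  unfolding path_prob_def by (auto intro!: prod_nonneg nonneg)

definition cylinder :: "'a \<Rightarrow> nat \<Rightarrow> (nat \<Rightarrow> 'a) \<Rightarrow> 'w set" where
  "cylinder x n ys = {\<omega> \<in> space (M x). \<forall>k\<le>n. jc k \<omega> = ys k}"

definition positive_holding :: "'a \<Rightarrow> nat \<Rightarrow> 'w set" where
  "positive_holding x n = {\<omega> \<in> space (M x). \<forall>k\<in>{1..n}. 0 < \<sigma> k \<omega>}"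

lemma sets_cylinder[measurable]: "cylinder x n ys \<in> sets (M x)"
  unfolding cylinder_def by measurable

lemma sets_positive_holding[measurable]: "positive_holding x n \<in> sets (M x)"
  unfolding positive_holding_def by measurable

lemma emeasure_cylinder_Int_eq_nn_integral:
  assumes [measurable]: "X \<in> sets (M x)"
  shows "emeasure (M x) (cylinder x n ys \<inter> X)
    = (\<integral>\<^sup>+y. emeasure (M x) (cylinder x (Suc n) (ys(Suc n := y)) \<inter> X) \<partial>count_space UNIV)"
proof -
  have eq: "cylinder x n ys \<inter> X = (\<Union>y\<in>UNIV. cylinder x (Suc n) (ys(Suc n := y)) \<inter> X)"
    by (auto simp: cylinder_def le_Suc_eq)
  have "disjoint_family (\<lambda>y. cylinder x (Suc n) (ys(Suc n := y)) \<inter> X)"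
    by (auto simp: disjoint_family_on_def cylinder_def)
  then show ?thesis unfolding eq by (subst emeasure_UN_countable) auto
qed

lemma emeasure_cylinder_positive_holding_tail:
  assumes "0 \<le> t"
  shows "emeasure (M x) (cylinder x n ys \<inter> (positive_holding x n \<inter> {\<omega>\<in>space (M x). t < \<sigma> (Suc n) \<omega>}))
    = ennreal (path_prob (jump_matrix \<Gamma>) x n ys * exp (- rate \<Gamma> (ys n) * t))"
proof -
  define ts where "ts k = (if k = Suc n then t else 0)" for k
  have step: "emeasure (M x) (cylinder x (Suc n) (ys(Suc n := y))
        \<inter> (positive_holding x n \<inter> {\<omega>\<in>space (M x). t < \<sigma> (Suc n) \<omega>}))
      = ennreal (path_prob (jump_matrix \<Gamma>) x n ys * exp (- rate \<Gamma> (ys n) * t))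
          * ennreal (jump_matrix \<Gamma> (ys n) y)" for y
  proof -
    let ?ys = "ys(Suc n := y)"
    have ts_nonneg: "\<forall>k\<in>{1..Suc n}. 0 \<le> ts k" using assms by (simp add: ts_def)
    have event: "cylinder x (Suc n) ?ys \<inter> (positive_holding x n \<inter> {\<omega>\<in>space (M x). t < \<sigma> (Suc n) \<omega>})
       = {\<omega> \<in> space (M x). (\<forall>k\<le>Suc n. jc k \<omega> = ?ys k) \<and> (\<forall>k\<in>{1..Suc n}. \<sigma> k \<omega> > ts k)}"
      by (auto simp: cylinder_def positive_holding_def ts_def le_Suc_eq)
    have "(\<Prod>k<n. jump_matrix \<Gamma> (?ys k) (?ys (Suc k)) * exp (- rate \<Gamma> (?ys k) * ts (Suc k)))
        = (\<Prod>k<n. jump_matrix \<Gamma> (ys k) (ys (Suc k)))"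
      by (intro prod.cong) (auto simp: ts_def)
    then have prod: "(if ?ys 0 = x then 1 else 0) *
        (\<Prod>k<Suc n. jump_matrix \<Gamma> (?ys k) (?ys (Suc k)) * exp (- rate \<Gamma> (?ys k) * ts (Suc k)))
      = (path_prob (jump_matrix \<Gamma>) x n ys * exp (- rate \<Gamma> (ys n) * t)) * jump_matrix \<Gamma> (ys n) y"
      by (simp add: ts_def path_prob_def)
    have "0 \<le> path_prob (jump_matrix \<Gamma>) x n ys * exp (- rate \<Gamma> (ys n) * t)"
      using path_prob_jump_matrix_nonneg[of x n ys] by simp
    then show ?thesis
      unfolding event emeasure_path_holding_event[OF ts_nonneg] prod by (rule ennreal_mult[OF _ nonneg])
  qed
  show ?thesis
    by (simp add: emeasure_cylinder_Int_eq_nn_integral[where n = n] step nn_integral_cmult row_sum)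
qed

lemma emeasure_cylinder_positive_holding:
  "emeasure (M x) (cylinder x n ys \<inter> positive_holding x n) = ennreal (path_prob (jump_matrix \<Gamma>) x n ys)"
proof -
  have "cylinder x n ys \<inter> positive_holding x n
     = {\<omega> \<in> space (M x). (\<forall>k\<le>n. jc k \<omega> = ys k) \<and> (\<forall>k\<in>{1..n}. \<sigma> k \<omega> > (\<lambda>_. 0) k)}"
    by (auto simp: cylinder_def positive_holding_def)
  then show ?thesis by (simp only:) (subst emeasure_path_holding_event, auto simp: path_prob_def)
qed

lemma AE_positive_holding_upto: "AE \<omega> in M x. \<forall>k\<in>{1..n}. 0 < \<sigma> k \<omega>"
proof (induction n)
  case (Suc n)
  interpret prob_space "M x" by (rule prob_space_M)
  let ?N = "\<lambda>ys. cylinder x n ys \<inter> positive_holding x n \<inter> {\<omega>\<in>space (M x). \<sigma> (Suc n) \<omega> \<le> 0}"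
  have null: "emeasure (M x) (?N ys) = 0" for ys
  proof -
    have "?N ys = (cylinder x n ys \<inter> positive_holding x n)
        - (cylinder x n ys \<inter> (positive_holding x n \<inter> {\<omega>\<in>space (M x). 0 < \<sigma> (Suc n) \<omega>}))"
      by (auto simp: cylinder_def)
    also have "emeasure (M x) \<dots> = emeasure (M x) (cylinder x n ys \<inter> positive_holding x n)
        - emeasure (M x) (cylinder x n ys \<inter> (positive_holding x n \<inter> {\<omega>\<in>space (M x). 0 < \<sigma> (Suc n) \<omega>}))"
      by (rule emeasure_Diff) auto
    finally show ?thesis
      using emeasure_cylinder_positive_holding[of x n ys]
        emeasure_cylinder_positive_holding_tail[of 0 x n ys] by simp
  qed
  have "countable (PiE {..n} (\<lambda>_. UNIV :: 'a set))" by (intro countable_PiE) auto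
  then have "(\<Union>ys\<in>PiE {..n} (\<lambda>_. UNIV). ?N ys) \<in> null_sets (M x)"
    by (intro null_sets_UN') (auto simp: null)
  then have "AE \<omega> in M x. (\<forall>k\<in>{1..n}. 0 < \<sigma> k \<omega>) \<longrightarrow> 0 < \<sigma> (Suc n) \<omega>"
  proof (rule AE_I', intro subsetI)
    fix \<omega> assume "\<omega> \<in> {\<omega> \<in> space (M x). \<not> ((\<forall>k\<in>{1..n}. 0 < \<sigma> k \<omega>) \<longrightarrow> 0 < \<sigma> (Suc n) \<omega>)}"
    then have "\<omega> \<in> ?N (restrict (\<lambda>k. jc k \<omega>) {..n})"
      by (auto simp: cylinder_def positive_holding_def)
    moreover have "restrict (\<lambda>k. jc k \<omega>) {..n} \<in> PiE {..n} (\<lambda>_. UNIV)" by simp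
    ultimately show "\<omega> \<in> (\<Union>ys\<in>PiE {..n} (\<lambda>_. UNIV). ?N ys)" by blast
  qed
  with Suc.IH show ?case by eventually_elim (auto simp: le_Suc_eq)
qed simp

lemma AE_positive_holding: "AE \<omega> in M x. \<forall>k\<ge>1. 0 < \<sigma> k \<omega>"
proof -
  have "AE \<omega> in M x. \<forall>n. \<forall>k\<in>{1..n}. 0 < \<sigma> k \<omega>"
    using AE_positive_holding_upto by (subst AE_all_countable) auto
  then show ?thesis by eventually_elim (meson atLeastAtMost_iff order_refl)
qed

text \<open>The realization prescribes the law only on events with strict lower bounds on the holding
  times; as these are almost surely positive, it determines the cylinder probabilities.\<close>

lemma emeasure_cylinder: "emeasure (M x) (cylinder x n ys) = ennreal (path_prob (jump_matrix \<Gamma>) x n ys)"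
proof -
  have "emeasure (M x) (cylinder x n ys) = emeasure (M x) (cylinder x n ys \<inter> positive_holding x n)"
    by (rule emeasure_eq_AE)
      (use AE_positive_holding_upto[where x = x and n = n] in \<open>auto simp: positive_holding_def\<close>)
  then show ?thesis by (simp add: emeasure_cylinder_positive_holding)
qed

lemma emeasure_cylinder_holding_tail:
  assumes "0 \<le> t"
  shows "emeasure (M x) (cylinder x n ys \<inter> {\<omega>\<in>space (M x). t < \<sigma> (Suc n) \<omega>})
    = ennreal (exp (- rate \<Gamma> (ys n) * t)) * emeasure (M x) (cylinder x n ys)"
proof -
  have "emeasure (M x) (cylinder x n ys \<inter> {\<omega>\<in>space (M x). t < \<sigma> (Suc n) \<omega>})
      = emeasure (M x) (cylinder x n ys \<inter> (positive_holding x n \<inter> {\<omega>\<in>space (M x). t < \<sigma> (Suc n) \<omega>}))"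
    by (rule emeasure_eq_AE)
      (use AE_positive_holding_upto[where x = x and n = n] in \<open>auto simp: positive_holding_def\<close>)
  also have "\<dots> = ennreal (path_prob (jump_matrix \<Gamma>) x n ys * exp (- rate \<Gamma> (ys n) * t))"
    by (rule emeasure_cylinder_positive_holding_tail[OF assms])
  finally show ?thesis
    using path_prob_jump_matrix_nonneg[of x n ys] nonneg
    by (simp add: emeasure_cylinder ennreal_mult mult.commute)
qed

lemma emeasure_cylinder_next:
  "emeasure (M x) (cylinder x n ys \<inter> {\<omega>\<in>space (M x). jc (Suc n) \<omega> = y})
    = ennreal (jump_matrix \<Gamma> (ys n) y) * emeasure (M x) (cylinder x n ys)"
proof -
  have "cylinder x n ys \<inter> {\<omega>\<in>space (M x). jc (Suc n) \<omega> = y} = cylinder x (Suc n) (ys(Suc n := y))"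
    by (auto simp: cylinder_def le_Suc_eq)
  then show ?thesis
    using path_prob_jump_matrix_nonneg[of x n ys] nonneg[of "ys n" y] nonneg
    by (simp add: emeasure_cylinder path_prob_Suc ennreal_mult mult.commute)
qed

lemma emeasure_UN_cylinders_Int_proportional:
  assumes S: "S \<subseteq> PiE {..n} (\<lambda>_. UNIV)" and [measurable]: "X \<in> sets (M x)"
    and c: "\<And>ys. ys \<in> S \<Longrightarrow> emeasure (M x) (cylinder x n ys \<inter> X) = c * emeasure (M x) (cylinder x n ys)"
  shows "emeasure (M x) ((\<Union>ys\<in>S. cylinder x n ys) \<inter> X) = c * emeasure (M x) (\<Union>ys\<in>S. cylinder x n ys)"
proof -
  have "countable S" by (rule countable_subset[OF S]) (intro countable_PiE, auto)
  have disjoint: "cylinder x n ys \<inter> cylinder x n ys' = {}" if ys: "ys \<in> S" "ys' \<in> S" "ys \<noteq> ys'" for ys ys'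
  proof -
    obtain k where "k \<le> n" "ys k \<noteq> ys' k"
      using ys S PiE_ext[of ys "{..n}" "\<lambda>_. UNIV" ys'] by auto
    then show ?thesis by (auto simp: cylinder_def)
  qed
  have disj: "disjoint_family_on (cylinder x n) S" "disjoint_family_on (\<lambda>ys. cylinder x n ys \<inter> X) S"
    unfolding disjoint_family_on_def using disjoint by auto
  have "emeasure (M x) ((\<Union>ys\<in>S. cylinder x n ys) \<inter> X) = emeasure (M x) (\<Union>ys\<in>S. cylinder x n ys \<inter> X)"
    by (simp add: Int_UN_distrib2)
  also have "\<dots> = (\<integral>\<^sup>+ys. emeasure (M x) (cylinder x n ys \<inter> X) \<partial>count_space S)"
    by (rule emeasure_UN_countable[OF _ \<open>countable S\<close> disj(2)]) auto
  also have "\<dots> = (\<integral>\<^sup>+ys. c * emeasure (M x) (cylinder x n ys) \<partial>count_space S)"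
    by (rule nn_integral_cong) (simp add: c)
  also have "\<dots> = c * (\<integral>\<^sup>+ys. emeasure (M x) (cylinder x n ys) \<partial>count_space S)"
    by (rule nn_integral_cmult) simp
  also have "(\<integral>\<^sup>+ys. emeasure (M x) (cylinder x n ys) \<partial>count_space S)
      = emeasure (M x) (\<Union>ys\<in>S. cylinder x n ys)"
    by (rule emeasure_UN_countable[OF _ \<open>countable S\<close> disj(1), symmetric]) auto
  finally show ?thesis .
qed

definition taboo_event :: "'a \<Rightarrow> 'a set \<Rightarrow> nat \<Rightarrow> 'a \<Rightarrow> 'w set" where
  "taboo_event x B n y = {\<omega>\<in>space (M x). jc n \<omega> = y \<and> (\<forall>k<n. jc k \<omega> \<notin> B)}"

lemma sets_taboo_event[measurable]: "taboo_event x B n y \<in> sets (M x)"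
  unfolding taboo_event_def by measurable

lemma taboo_event_eq_UN_cylinder:
  "taboo_event x B n y = (\<Union>ys\<in>{ys \<in> PiE {..n} (\<lambda>_. UNIV). ys n = y \<and> (\<forall>k<n. ys k \<notin> B)}. cylinder x n ys)"
proof (intro equalityI subsetI)
  fix \<omega> assume \<omega>: "\<omega> \<in> taboo_event x B n y"
  then have "restrict (\<lambda>k. jc k \<omega>) {..n} \<in> {ys \<in> PiE {..n} (\<lambda>_. UNIV). ys n = y \<and> (\<forall>k<n. ys k \<notin> B)}"
    by (auto simp: taboo_event_def)
  moreover have "\<omega> \<in> cylinder x n (restrict (\<lambda>k. jc k \<omega>) {..n})"
    using \<omega> by (auto simp: cylinder_def taboo_event_def)
  ultimately show "\<omega> \<in> (\<Union>ys\<in>{ys \<in> PiE {..n} (\<lambda>_. UNIV). ys n = y \<and> (\<forall>k<n. ys k \<notin> B)}. cylinder x n ys)"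
    by blast
qed (auto simp: taboo_event_def cylinder_def)

lemma emeasure_taboo_event_proportional:
  assumes [measurable]: "X \<in> sets (M x)"
    and "\<And>ys. ys n = y \<Longrightarrow> emeasure (M x) (cylinder x n ys \<inter> X) = c * emeasure (M x) (cylinder x n ys)"
  shows "emeasure (M x) (taboo_event x B n y \<inter> X) = c * emeasure (M x) (taboo_event x B n y)"
  unfolding taboo_event_eq_UN_cylinder
  by (rule emeasure_UN_cylinders_Int_proportional) (auto simp: assms)

lemma emeasure_taboo_event: "emeasure (M x) (taboo_event x B n y) = taboo_prob (jump_matrix \<Gamma>) B n x y"
proof (induction n arbitrary: y)
  case 0
  have "taboo_event x B 0 y = cylinder x 0 (\<lambda>_. y)" by (auto simp: taboo_event_def cylinder_def)
  then show ?case by (simp add: emeasure_cylinder path_prob_def)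
next
  case (Suc n y')
  let ?X = "\<lambda>y. if y \<in> B then {} else taboo_event x B n y \<inter> {\<omega>\<in>space (M x). jc (Suc n) \<omega> = y'}"
  have eq: "taboo_event x B (Suc n) y' = (\<Union>y\<in>UNIV. ?X y)"
    by (auto simp: taboo_event_def less_Suc_eq split: if_splits)
  have "disjoint_family ?X"
    by (auto simp: disjoint_family_on_def taboo_event_def)
  then have "emeasure (M x) (taboo_event x B (Suc n) y') = (\<integral>\<^sup>+y. emeasure (M x) (?X y) \<partial>count_space UNIV)"
    unfolding eq by (rule emeasure_UN_countable[rotated 2]) auto
  also have "\<dots> = (\<integral>\<^sup>+y.
      (if y \<in> B then 0 else taboo_prob (jump_matrix \<Gamma>) B n x y * ennreal (jump_matrix \<Gamma> y y'))
      \<partial>count_space UNIV)"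
    by (intro nn_integral_cong)
      (simp add: emeasure_taboo_event_proportional emeasure_cylinder_next Suc.IH mult.commute)
  also have "\<dots> = taboo_prob (jump_matrix \<Gamma>) B (Suc n) x y'" by (rule taboo_prob_Suc_last[symmetric])
  finally show ?case .
qed

lemma nn_integral_exponential_holding_time:
  assumes [measurable]: "E \<in> sets (M x)" and r: "0 < r"
    and tail: "\<And>t. 0 \<le> t \<Longrightarrow>
      emeasure (M x) (E \<inter> {\<omega>\<in>space (M x). t < \<sigma> m \<omega>}) = ennreal (exp (- r * t)) * emeasure (M x) E"
  shows "(\<integral>\<^sup>+\<omega>. ennreal (\<sigma> m \<omega>) * indicator E \<omega> \<partial>M x) = emeasure (M x) E * ennreal (1 / r)"
proof -
  interpret pair_sigma_finite "M x" lborel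
    by (intro pair_sigma_finite.intro prob_space_imp_sigma_finite[OF prob_space_M]
        lborel.sigma_finite_measure_axioms)
  define f where "f \<omega> t = (if \<omega> \<in> E \<and> 0 \<le> t \<and> t < \<sigma> m \<omega> then 1 else 0 :: ennreal)" for \<omega> t
  have f_measurable: "case_prod f \<in> borel_measurable (M x \<Otimes>\<^sub>M lborel)" unfolding f_def by measurable
  have inner_time: "(\<integral>\<^sup>+t. f \<omega> t \<partial>lborel) = ennreal (\<sigma> m \<omega>) * indicator E \<omega>" for \<omega>
  proof (cases "\<omega> \<in> E \<and> 0 \<le> \<sigma> m \<omega>")
    case True
    then have "(\<integral>\<^sup>+t. f \<omega> t \<partial>lborel) = (\<integral>\<^sup>+t. indicator {0..<\<sigma> m \<omega>} t \<partial>lborel)"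
      by (intro nn_integral_cong) (auto simp: f_def split: split_indicator)
    then show ?thesis using True by simp
  next
    case False
    then have "(\<integral>\<^sup>+t. f \<omega> t \<partial>lborel) = (\<integral>\<^sup>+(t::real). 0 \<partial>lborel)"
      by (intro nn_integral_cong) (auto simp: f_def)
    then show ?thesis using False by (auto simp: ennreal_neg)
  qed
  have inner_event:
    "(\<integral>\<^sup>+\<omega>. f \<omega> t \<partial>M x) = indicator {0..} t * ennreal (exp (- r * t)) * emeasure (M x) E" for t
  proof (cases "0 \<le> t")
    case True
    have "(\<integral>\<^sup>+\<omega>. f \<omega> t \<partial>M x) = (\<integral>\<^sup>+\<omega>. indicator (E \<inter> {\<omega>\<in>space (M x). t < \<sigma> m \<omega>}) \<omega> \<partial>M x)"
      using True sets.sets_into_space[OF assms(1)]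
      by (intro nn_integral_cong) (auto simp: f_def split: split_indicator)
    then show ?thesis using True tail[OF True] by simp
  next
    case False
    then have "(\<integral>\<^sup>+\<omega>. f \<omega> t \<partial>M x) = (\<integral>\<^sup>+\<omega>. 0 \<partial>M x)"
      by (intro nn_integral_cong) (auto simp: f_def)
    then show ?thesis using False by simp
  qed
  have "(\<integral>\<^sup>+\<omega>. ennreal (\<sigma> m \<omega>) * indicator E \<omega> \<partial>M x) = (\<integral>\<^sup>+t. (\<integral>\<^sup>+\<omega>. f \<omega> t \<partial>M x) \<partial>lborel)"
    unfolding inner_time[symmetric] by (rule Fubini'[OF f_measurable, symmetric])
  also have "\<dots> = (\<integral>\<^sup>+t. indicator {0..} t * ennreal (exp (- r * t)) \<partial>lborel) * emeasure (M x) E"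
    unfolding inner_event by (rule nn_integral_multc) simp
  also have "\<dots> = emeasure (M x) E * ennreal (1 / r)"
    by (subst nn_integral_exp_neg[OF r]) (rule mult.commute)
  finally show ?thesis .
qed

lemma nn_integral_holding_time_while_avoiding:
  "(\<integral>\<^sup>+\<omega>. ennreal (\<sigma> (Suc k) \<omega>) * (if \<forall>j\<le>k. jc j \<omega> \<notin> B then 1 else 0) \<partial>M x)
    = (\<integral>\<^sup>+y. (if y \<in> B then 0 else ennreal (1 / rate \<Gamma> y) * taboo_prob (jump_matrix \<Gamma>) B k x y)
        \<partial>count_space UNIV)"
proof -
  have avoid_eq: "(if \<forall>j\<le>k. jc j \<omega> \<notin> B then 1 else 0)
      = (\<integral>\<^sup>+y. (if y \<in> B then 0 else indicator (taboo_event x B k y) \<omega>) \<partial>count_space UNIV)"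
    if "\<omega> \<in> space (M x)" for \<omega>
  proof -
    have "(\<integral>\<^sup>+y. (if y \<in> B then 0 else indicator (taboo_event x B k y) \<omega>) \<partial>count_space UNIV)
        = (\<integral>\<^sup>+y. (if y = jc k \<omega> then (if \<forall>j\<le>k. jc j \<omega> \<notin> B then 1 else 0) else 0) \<partial>count_space UNIV)"
      using that by (intro nn_integral_cong) (auto simp: taboo_event_def le_less split: split_indicator)
    then show ?thesis by (simp add: nn_integral_count_space_point)
  qed
  have "(\<integral>\<^sup>+\<omega>. ennreal (\<sigma> (Suc k) \<omega>) * (if \<forall>j\<le>k. jc j \<omega> \<notin> B then 1 else 0) \<partial>M x)
     = (\<integral>\<^sup>+\<omega>. \<integral>\<^sup>+y. ennreal (\<sigma> (Suc k) \<omega>) * (if y \<in> B then 0 else indicator (taboo_event x B k y) \<omega>)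
         \<partial>count_space UNIV \<partial>M x)"
    by (rule nn_integral_cong) (simp add: avoid_eq nn_integral_cmult)
  also have "\<dots> = (\<integral>\<^sup>+y. \<integral>\<^sup>+\<omega>.
         ennreal (\<sigma> (Suc k) \<omega>) * (if y \<in> B then 0 else indicator (taboo_event x B k y) \<omega>)
         \<partial>M x \<partial>count_space UNIV)"
    by (rule nn_integral_count_space_nn_integral) auto
  also have "\<dots> = (\<integral>\<^sup>+y. (if y \<in> B then 0 else ennreal (1 / rate \<Gamma> y) * taboo_prob (jump_matrix \<Gamma>) B k x y)
      \<partial>count_space UNIV)"
    by (intro nn_integral_cong)
      (simp add: nn_integral_exponential_holding_time[OF _ rate_pos] emeasure_taboo_event_proportional
        emeasure_cylinder_holding_tail emeasure_taboo_event mult.commute)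
  finally show ?thesis .
qed

lemma measurable_truncated_hitting_time[measurable]:
  "truncated_hitting_time jc \<sigma> B n \<in> borel_measurable (M x)"
  unfolding truncated_hitting_time_def by measurable

lemma nn_integral_truncated_hitting_time:
  "(\<integral>\<^sup>+\<omega>. truncated_hitting_time jc \<sigma> B n \<omega> \<partial>M x)
    = truncated_cost (jump_matrix \<Gamma>) (\<lambda>y. 1 / rate \<Gamma> y) B n x"
  unfolding truncated_hitting_time_def
  by (subst nn_integral_sum)
    (simp_all add: nn_integral_holding_time_while_avoiding truncated_cost_eq_sum_taboo_prob)

lemma INF_avoid_prob_eq_emeasure_never_visits:
  "(INF n. avoid_prob (jump_matrix \<Gamma>) B n x) = emeasure (M x) {\<omega>\<in>space (M x). \<forall>k. jc k \<omega> \<notin> B}"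
proof -
  interpret prob_space "M x" by (rule prob_space_M)
  define S where "S n = {\<omega>\<in>space (M x). \<forall>k<n. jc k \<omega> \<notin> B}" for n
  have [measurable]: "S n \<in> sets (M x)" for n unfolding S_def by measurable
  have "emeasure (M x) (S n) = avoid_prob (jump_matrix \<Gamma>) B n x" for n
  proof -
    have "S n = (\<Union>y\<in>UNIV. taboo_event x B n y)" by (auto simp: S_def taboo_event_def)
    moreover have "disjoint_family (taboo_event x B n)"
      by (auto simp: disjoint_family_on_def taboo_event_def)
    ultimately have "emeasure (M x) (S n) = (\<integral>\<^sup>+y. emeasure (M x) (taboo_event x B n y) \<partial>count_space UNIV)"
      by (simp only:) (rule emeasure_UN_countable, auto)
    then show ?thesis by (simp add: emeasure_taboo_event avoid_prob_eq_nn_integral_taboo_prob)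
  qed
  moreover have "(INF n. emeasure (M x) (S n)) = emeasure (M x) (\<Inter>n. S n)"
    by (intro INF_emeasure_decseq) (auto simp: decseq_def S_def)
  moreover have "(\<Inter>n. S n) = {\<omega>\<in>space (M x). \<forall>k. jc k \<omega> \<notin> B}"
    by (auto simp: S_def)
  ultimately show ?thesis by simp
qed

lemma truncated_cost_le_expected_hitting_time:
  "truncated_cost (jump_matrix \<Gamma>) (\<lambda>y. 1 / rate \<Gamma> y) B n x \<le> expected_hitting_time M jc \<sigma> x B"
proof -
  have "AE \<omega> in M x. truncated_hitting_time jc \<sigma> B n \<omega> \<le> hitting_time jc \<sigma> B \<omega>"
    using AE_positive_holding[where x = x]
    by eventually_elim (intro truncated_hitting_time_le_hitting_time, simp add: less_imp_le)
  then show ?thesis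
    unfolding nn_integral_truncated_hitting_time[symmetric] expected_hitting_time_def
    by (rule nn_integral_mono_AE)
qed

lemma emeasure_never_visits_eq_0:
  assumes "expected_hitting_time M jc \<sigma> x B < top"
  shows "emeasure (M x) {\<omega>\<in>space (M x). \<forall>k. jc k \<omega> \<notin> B} = 0"
proof (rule ccontr)
  let ?N = "{\<omega>\<in>space (M x). \<forall>k. jc k \<omega> \<notin> B}"
  have [measurable]: "?N \<in> sets (M x)" by measurable
  assume "emeasure (M x) ?N \<noteq> 0"
  then have "top = top * emeasure (M x) ?N" by (simp add: ennreal_top_mult)
  also have "\<dots> = (\<integral>\<^sup>+\<omega>. top * indicator ?N \<omega> \<partial>M x)" by (simp add: nn_integral_cmult_indicator)
  also have "\<dots> \<le> expected_hitting_time M jc \<sigma> x B"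
    unfolding expected_hitting_time_def
    by (intro nn_integral_mono) (auto simp: hitting_time_eq_top_if_never_visits split: split_indicator)
  finally show False using assms by (simp add: top_unique)
qed

lemma expected_hitting_time_le_SUP_truncated_cost:
  assumes "emeasure (M x) {\<omega>\<in>space (M x). \<forall>k. jc k \<omega> \<notin> B} = 0"
  shows "expected_hitting_time M jc \<sigma> x B \<le> (SUP n. truncated_cost (jump_matrix \<Gamma>) (\<lambda>y. 1 / rate \<Gamma> y) B n x)"
proof -
  have "AE \<omega> in M x. \<exists>N. jc N \<omega> \<in> B"
    using assms by (intro AE_I'[of "{\<omega>\<in>space (M x). \<forall>k. jc k \<omega> \<notin> B}"]) auto
  with AE_positive_holding[where x = x]
  have "AE \<omega> in M x. hitting_time jc \<sigma> B \<omega> \<le> (SUP n. truncated_hitting_time jc \<sigma> B n \<omega>)"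
    by eventually_elim (auto intro: hitting_time_le_SUP_truncated_hitting_time)
  then have "expected_hitting_time M jc \<sigma> x B \<le> (\<integral>\<^sup>+\<omega>. (SUP n. truncated_hitting_time jc \<sigma> B n \<omega>) \<partial>M x)"
    unfolding expected_hitting_time_def by (rule nn_integral_mono_AE)
  also have "\<dots> = (SUP n. \<integral>\<^sup>+\<omega>. truncated_hitting_time jc \<sigma> B n \<omega> \<partial>M x)"
    by (rule nn_integral_monotone_convergence_SUP[OF incseq_truncated_hitting_time]) simp
  finally show ?thesis by (simp add: nn_integral_truncated_hitting_time)
qed

theorem implodes_towards_singleton:
  assumes "jump_irreducible \<Gamma>" and "finite A" and "0 \<le> C"
    and bounded: "\<And>x. expected_hitting_time M jc \<sigma> x A \<le> ennreal C"
  shows "implodes_towards M jc \<sigma> {z}"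
proof -
  let ?P = "jump_matrix \<Gamma>" and ?g = "\<lambda>y. 1 / rate \<Gamma> y"
  have irreducible: "(x, y) \<in> {(u, v). 0 < ?P u v}\<^sup>*" for x y
    using \<open>jump_irreducible \<Gamma>\<close> by (simp add: jump_irreducible_def)
  obtain A' where "finite A'" "A \<subseteq> A'" "z \<in> A'"
    and conn: "\<And>a. a \<in> A' \<Longrightarrow> (a, z) \<in> ({(u, v). 0 < ?P u v} \<inter> A' \<times> A')\<^sup>*"
    using finite_superset_rtrancl_connected[OF irreducible \<open>finite A\<close>] by blast
  have g_nonneg: "0 \<le> ?g y" for y using rate_pos[of y] by simp
  have bounded': "truncated_cost ?P ?g A' n x \<le> ennreal C" for n x
    using truncated_cost_antimono[OF \<open>A \<subseteq> A'\<close>] truncated_cost_le_expected_hitting_time bounded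
    by (meson order_trans)
  obtain K where K: "\<And>n x. truncated_cost ?P ?g {z} n x \<le> ennreal K"
    using truncated_cost_singleton_bounded[OF \<open>finite A'\<close> \<open>z \<in> A'\<close> conn g_nonneg \<open>0 \<le> C\<close> bounded']
    by blast
  have "(INF n. avoid_prob ?P A' n x) = 0" for x
  proof -
    have "(INF n. avoid_prob ?P A' n x) \<le> (INF n. avoid_prob ?P A n x)"
      by (intro INF_mono' avoid_prob_antimono \<open>A \<subseteq> A'\<close>)
    also have "\<dots> = 0" using bounded[of x]
      by (simp add: INF_avoid_prob_eq_emeasure_never_visits emeasure_never_visits_eq_0 le_less_trans)
    finally show ?thesis by simp
  qed
  then have "(INF n. avoid_prob ?P {z} n x) = 0" for x
    by (rule INF_avoid_prob_singleton_eq_0[OF irreducible \<open>finite A'\<close> \<open>z \<in> A'\<close>])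
  then have "expected_hitting_time M jc \<sigma> x {z} \<le> ennreal K" for x
    using expected_hitting_time_le_SUP_truncated_cost[of x "{z}"] K
    by (simp add: INF_avoid_prob_eq_emeasure_never_visits) (meson SUP_least order_trans)
  then show ?thesis
    unfolding implodes_towards_def
    by (intro exI[of _ "max K 1"]) (auto intro: order_trans[OF _ ennreal_leI[OF max.cobounded1]])
qed

end

theorem proposition2p5:
  fixes \<Gamma> :: "'a::countable \<Rightarrow> 'a \<Rightarrow> real"
    and M :: "'a \<Rightarrow> 'w measure"
    and jc :: "nat \<Rightarrow> 'w \<Rightarrow> 'a"
    and \<sigma> :: "nat \<Rightarrow> 'w \<Rightarrow> real"
    and A :: "'a set" and C :: real
  assumes "infinite (UNIV :: 'a set)"
    and "generator \<Gamma>"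
    and "jump_irreducible \<Gamma>"
    and "ctmc_realization \<Gamma> M jc \<sigma>"
    and "recurrent_chain M jc"
    and "finite A" and "C > 0"
    and "\<forall>x. expected_hitting_time M jc \<sigma> x A \<le> ennreal C"
  shows "\<forall>z. implodes_towards M jc \<sigma> {z}"
proof
  fix z
  interpret ctmc_model \<Gamma> M jc \<sigma> using assms(2,4) by unfold_locales
  show "implodes_towards M jc \<sigma> {z}"
    using assms(3,6-8) by (intro implodes_towards_singleton[where A = A and C = C]) auto
qed

end
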